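(* Let $f:\mathbb{R}^n\to\mathbb{R}$, $c:\mathbb{R}^n\to\mathbb{R}^m$, and consider Algorithm 1 (described in the context) under the Standing Assumption of the context. Then for every $k\in\mathbb{N}$ the inner loop over $j$ terminates finitely. Moreover, for all $k\in\mathbb{N}$, $$L_k\le L_{\max}:=\max\{L_{-1},\rho L\}\quad\text{and}\quad\gamma_{k,i}\le\gamma_{\max,i}:=\max\{\gamma_{-1,i},\rho\gamma_i\}\ \text{ for all } i\in\{1,\dots,m\}.$$
   Context: Notation: $g_k=\nabla f(x_k)$, $c_k=c(x_k)$, $J_k=\nabla c(x_k)^T$; $\phi(x,\tau)=\tau f(x)+\|c(x)\|_1$; $\Delta q(x,\tau,g,H,d)=-\tau(g^Td+\frac12\max\{d^THd,0\})+\|c(x)\|_1$. $\{H_k\}$ are symmetric with $\|H_k\|_2\le\kappa_H$ and $u^TH_ku\ge\zeta\|u\|_2^2$ whenever $J_ku=0$. Algorithm 1 (inputs $x_0$, $\tau_{-1}>0$, $\epsilon,\sigma,\eta\in(0,1)$, $\rho>1$, $L_{-1}>0$, $\gamma_{-1,i}>0$): at iteration $k$, $(d_k,y_k)$ solves $H_kd_k+J_k^Ty_k=-g_k$, $J_kd_k=-c_k$; stop if $g_k+J_k^Ty_k=0$ and $c_k=0$. Set $\tau_k^{trial}=\infty$ if $g_k^Td_k+\max\{d_k^TH_kd_k,0\}\le0$, else $\frac{(1-\sigma)\|c_k\|_1}{g_k^Td_k+\max\{d_k^TH_kd_k,0\}}$; $\tau_k=\tau_{k-1}$ if $\tau_{k-1}\le\tau_k^{trial}$,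 else $(1-\epsilon)\tau_k^{trial}$. Choose $L_{k,0}\in(0,L_{k-1}]$ and $\gamma_{k,i,0}\in(0,\gamma_{k-1,i}]$. For $j=0,1,\dots$: with $\Lambda_{k,j}=\tau_kL_{k,j}+\sum_i\gamma_{k,i,j}$, $\widehat\alpha_{k,j}=\frac{2(1-\eta)\Delta q(x_k,\tau_k,g_k,H_k,d_k)}{\Lambda_{k,j}\|d_k\|_2^2}$, $\widetilde\alpha_{k,j}=\widehat\alpha_{k,j}-\frac{4\|c_k\|_1}{\Lambda_{k,j}\|d_k\|_2^2}$; $\alpha_{k,j}=\widehat\alpha_{k,j}$ if $\widehat\alpha_{k,j}<1$, $1$ if $\widetilde\alpha_{k,j}\le1\le\widehat\alpha_{k,j}$, $\widetilde\alpha_{k,j}$ if $\widetilde\alpha_{k,j}>1$. Let (SD) be $\phi(x_k+\alpha_{k,j}d_k,\tau_k)\le\phi(x_k,\tau_k)-\eta\alpha_{k,j}\Delta q(x_k,\tau_k,g_k,H_k,d_k)$, (LF) be $f(x_k+\alpha_{k,j}d_k)\le f(x_k)+\alpha_{k,j}g_k^Td_k+\frac12L_{k,j}\alpha_{k,j}^2\|d_k\|_2^2$, (LC$_i$) be $|c_i(x_k+\alpha_{k,j}d_k)|\le|c_i(x_k)+\alpha_{k,j}\nabla c_i(x_k)^Td_k|+\frac12\gamma_{k,i,j}\alpha_{k,j}^2\|d_k\|_2^2$. If (SD) holds, or (LF) and all (LC$_i$) hold: set $L_k=L_{k,j}$, $\gamma_{k,i}=\gamma_{k,i,j}$, $\alpha_k=\alpha_{k,j}$,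 $x_{k+1}=x_k+\alpha_kd_k$ and end the inner loop. Otherwise $L_{k,j+1}=\rho L_{k,j}$ if (LF) fails (else $L_{k,j}$), and $\gamma_{k,i,j+1}=\rho\gamma_{k,i,j}$ if (LC$_i$) fails (else $\gamma_{k,i,j}$). Standing Assumption: there is an open convex set $\mathcal X$ containing all iterates and all trial points $x_k+\alpha_{k,j}d_k$; $f$ is $C^1$ and bounded below on $\mathcal X$, $\nabla f$ is bounded and Lipschitz with constant $L$ on $\mathcal X$; $c$ and $\nabla c^T$ are bounded on $\mathcal X$; each $\nabla c_i$ is Lipschitz with constant $\gamma_i$ on $\mathcal X$; singular values of $\nabla c(x)^T$ bounded away from zero uniformly over $\mathcal X$. *)

theory Defs
  imports "HOL-Analysis.Analysis"
begin

text \<open>Conventions. Vectors in R^n are real^'n, constraint values in R^m are real^'m.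
 gc i x is the gradient of the i-th constraint c_i at x; the Jacobian J(x) has rows gc i x.\<close>

definition l1norm :: "real^'m \<Rightarrow> real" where
  "l1norm v = (\<Sum>i\<in>UNIV. \<bar>v $ i\<bar>)"

definition jac :: "('m \<Rightarrow> real^'n \<Rightarrow> real^'n) \<Rightarrow> real^'n \<Rightarrow> real^'n^'m" where
  "jac gc x = (\<chi> i. gc i x)"

definition merit :: "(real^'n \<Rightarrow> real) \<Rightarrow> (real^'n \<Rightarrow> real^'m) \<Rightarrow> real \<Rightarrow> real^'n \<Rightarrow> real" where
  "merit f c tau x = tau * f x + l1norm (c x)"

definition dq :: "real \<Rightarrow> real^'n \<Rightarrow> real^'n^'n \<Rightarrow> real^'n \<Rightarrow> real^'m \<Rightarrow> real" where
  "dq tau g H d cx = - tau * (g \<bullet> d + 1/2 * max (d \<bullet> (H *v d)) 0) + l1norm cx"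

text \<open>Merit parameter update: returns tau_k from tau_{k-1} (trial value infinity when denominator <= 0).\<close>
definition tau_upd :: "real \<Rightarrow> real \<Rightarrow> real \<Rightarrow> real^'n \<Rightarrow> real^'n^'n \<Rightarrow> real^'n \<Rightarrow> real^'m \<Rightarrow> real" where
  "tau_upd eps sgm taup g H d cx =
     (let den = g \<bullet> d + max (d \<bullet> (H *v d)) 0 in
      if den \<le> 0 then taup
      else (let tr = (1 - sgm) * l1norm cx / den in
            if taup \<le> tr then taup else (1 - eps) * tr))"

definition step_alpha :: "real \<Rightarrow> real \<Rightarrow> real \<Rightarrow> real \<Rightarrow> real \<Rightarrow> real" where
  "step_alpha eta Lam DQ dn2 cl1 =
     (let ah = 2 * (1 - eta) * DQ / (Lam * dn2);
          atl = ah - 4 * cl1 / (Lam * dn2) in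
      if ah < 1 then ah else if atl \<le> 1 then 1 else atl)"

definition alpha_of :: "real \<Rightarrow> real \<Rightarrow> real^'n \<Rightarrow> real^'n^'n \<Rightarrow> real^'n \<Rightarrow> real^'m \<Rightarrow> real \<Rightarrow> ('m \<Rightarrow> real) \<Rightarrow> real" where
  "alpha_of eta tau g H d cx L G =
     step_alpha eta (tau * L + (\<Sum>i\<in>UNIV. G i)) (dq tau g H d cx) ((norm d)\<^sup>2) (l1norm cx)"

definition LF_test :: "(real^'n \<Rightarrow> real) \<Rightarrow> real^'n \<Rightarrow> real^'n \<Rightarrow> real^'n \<Rightarrow> real \<Rightarrow> real \<Rightarrow> bool" where
  "LF_test f x g d a L \<longleftrightarrow>
     f (x + a *\<^sub>R d) \<le> f x + a * (g \<bullet> d) + 1/2 * L * a\<^sup>2 * (norm d)\<^sup>2"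

definition LC_test :: "(real^'n \<Rightarrow> real^'m) \<Rightarrow> ('m \<Rightarrow> real^'n \<Rightarrow> real^'n) \<Rightarrow> real^'n \<Rightarrow> real^'n \<Rightarrow> real \<Rightarrow> real \<Rightarrow> 'm \<Rightarrow> bool" where
  "LC_test c gc x d a G i \<longleftrightarrow>
     \<bar>c (x + a *\<^sub>R d) $ i\<bar> \<le> \<bar>c x $ i + a * (gc i x \<bullet> d)\<bar> + 1/2 * G * a\<^sup>2 * (norm d)\<^sup>2"

definition SD_test :: "(real^'n \<Rightarrow> real) \<Rightarrow> (real^'n \<Rightarrow> real^'m) \<Rightarrow> real \<Rightarrow> real \<Rightarrow> real^'n \<Rightarrow> real^'n \<Rightarrow> real \<Rightarrow> real \<Rightarrow> bool" where
  "SD_test f c eta tau x d a DQ \<longleftrightarrow>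
     merit f c tau (x + a *\<^sub>R d) \<le> merit f c tau x - eta * a * DQ"

text \<open>Updates are applied only while the acceptance test fails
  (after acceptance the values are never used).\<close>
fun inner_LG :: "(real^'n \<Rightarrow> real) \<Rightarrow> (real^'n \<Rightarrow> real^'n) \<Rightarrow> (real^'n \<Rightarrow> real^'m)
   \<Rightarrow> ('m \<Rightarrow> real^'n \<Rightarrow> real^'n)
   \<Rightarrow> real \<Rightarrow> real \<Rightarrow> real^'n \<Rightarrow> real^'n^'n \<Rightarrow> real^'n \<Rightarrow> real \<Rightarrow> real \<Rightarrow> ('m \<Rightarrow> real)
   \<Rightarrow> nat \<Rightarrow> real \<times> ('m \<Rightarrow> real)" where
  "inner_LG f gf c gc eta rho x H d tau L0 G0 0 = (L0, G0)"
| "inner_LG f gf c gc eta rho x H d tau L0 G0 (Suc j) =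
     (let LG = inner_LG f gf c gc eta rho x H d tau L0 G0 j;
          L = fst LG; G = snd LG;
          a = alpha_of eta tau (gf x) H d (c x) L G in
      (if LF_test f x (gf x) d a L then L else rho * L,
       \<lambda>i. if LC_test c gc x d a (G i) i then G i else rho * G i))"

definition trial_alpha :: "(real^'n \<Rightarrow> real) \<Rightarrow> (real^'n \<Rightarrow> real^'n) \<Rightarrow> (real^'n \<Rightarrow> real^'m)
   \<Rightarrow> ('m \<Rightarrow> real^'n \<Rightarrow> real^'n)
   \<Rightarrow> real \<Rightarrow> real \<Rightarrow> real^'n \<Rightarrow> real^'n^'n \<Rightarrow> real^'n \<Rightarrow> real \<Rightarrow> real \<Rightarrow> ('m \<Rightarrow> real)
   \<Rightarrow> nat \<Rightarrow> real" where
  "trial_alpha f gf c gc eta rho x H d tau L0 G0 j =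
     (let LG = inner_LG f gf c gc eta rho x H d tau L0 G0 j in
      alpha_of eta tau (gf x) H d (c x) (fst LG) (snd LG))"

definition accept :: "(real^'n \<Rightarrow> real) \<Rightarrow> (real^'n \<Rightarrow> real^'n) \<Rightarrow> (real^'n \<Rightarrow> real^'m)
   \<Rightarrow> ('m \<Rightarrow> real^'n \<Rightarrow> real^'n)
   \<Rightarrow> real \<Rightarrow> real \<Rightarrow> real^'n \<Rightarrow> real^'n^'n \<Rightarrow> real^'n \<Rightarrow> real \<Rightarrow> real \<Rightarrow> ('m \<Rightarrow> real)
   \<Rightarrow> nat \<Rightarrow> bool" where
  "accept f gf c gc eta rho x H d tau L0 G0 j \<longleftrightarrow>
     (let LG = inner_LG f gf c gc eta rho x H d tau L0 G0 j;
          a = trial_alpha f gf c gc eta rho x H d tau L0 G0 j in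
      SD_test f c eta tau x d a (dq tau (gf x) H d (c x))
      \<or> (LF_test f x (gf x) d a (fst LG) \<and> (\<forall>i. LC_test c gc x d a (snd LG i) i)))"

definition stop_test :: "(real^'n \<Rightarrow> real^'n) \<Rightarrow> (real^'n \<Rightarrow> real^'m) \<Rightarrow> ('m \<Rightarrow> real^'n \<Rightarrow> real^'n)
   \<Rightarrow> real^'n \<Rightarrow> real^'m \<Rightarrow> bool" where
  "stop_test gf c gc x y \<longleftrightarrow> gf x + transpose (jac gc x) *v y = 0 \<and> c x = 0"

end

(*
  On the segment from x_k to a trial point, which lies in X, a Lipschitz gradient bounds the
  linearization error of f by (L/2) |alpha d_k|^2 and that of c_i by (gamma_i/2) |alpha d_k|^2.
  Hence (LF) can fail only while L_{k,j} < L and (LC_i) only while gamma_{k,i,j} < gamma_i, so a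
  multiplication by rho never pushes a parameter above max {L_{k,0}, rho L} resp.
  max {gamma_{k,i,0}, rho gamma_i}; since L_{k,0} <= L_{k-1} and gamma_{k,i,0} <= gamma_{k-1,i},
  these bounds propagate over k. Every rejected trial multiplies at least one of the finitely many
  positive parameters by rho, so without acceptance their product would grow geometrically while
  staying bounded.
*)

theory Submission
  imports Defs
begin

lemma has_real_derivative_along_line:
  fixes phi :: "'a::real_normed_vector \<Rightarrow> real"
  assumes "(phi has_derivative D) (at (z + t *\<^sub>R v))"
  shows "((\<lambda>t. phi (z + t *\<^sub>R v)) has_real_derivative D v) (at t)"
proof -
  have "((\<lambda>t. z + t *\<^sub>R v) has_derivative (\<lambda>s. s *\<^sub>R v)) (at t)"
    by (auto intro!: derivative_eq_intros)
  from has_derivative_compose[OF this assms]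
  have "((\<lambda>t. phi (z + t *\<^sub>R v)) has_derivative (\<lambda>s. D (s *\<^sub>R v))) (at t)"
    by (simp add: o_def)
  moreover have "(\<lambda>s. D (s *\<^sub>R v)) = (*) (D v)"
    using linear_cmul[OF bounded_linear.linear[OF has_derivative_bounded_linear[OF assms]]] by auto
  ultimately show ?thesis
    by (simp add: has_field_derivative_def)
qed

lemma lipschitz_gradient_upper_bound:
  fixes phi :: "'a::real_inner \<Rightarrow> real"
  assumes "convex X" and deriv: "\<forall>w\<in>X. (phi has_derivative (\<lambda>h. g w \<bullet> h)) (at w)"
    and lip: "C-lipschitz_on X g" and "z \<in> X" "z + v \<in> X"
  shows "phi (z + v) - phi z - g z \<bullet> v \<le> C/2 * (norm v)\<^sup>2"
proof -
  define h where "h = (\<lambda>t. phi (z + t *\<^sub>R v) - t * (g z \<bullet> v) - C/2 * t\<^sup>2 * (norm v)\<^sup>2)"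
  have on_segment: "z + t *\<^sub>R v \<in> X" if "0 \<le> t" "t \<le> 1" for t
    using convexD_alt[OF \<open>convex X\<close> \<open>z \<in> X\<close> \<open>z + v \<in> X\<close> that]
    by (simp add: algebra_simps)
  have "h 1 \<le> h 0"
  proof (rule DERIV_nonpos_imp_nonincreasing[of 0 1 h])
    fix t :: real assume t: "0 \<le> t" "t \<le> 1"
    have "(g (z + t *\<^sub>R v) - g z) \<bullet> v \<le> norm (g (z + t *\<^sub>R v) - g z) * norm v"
      by (rule norm_cauchy_schwarz)
    also have "\<dots> \<le> C * norm (t *\<^sub>R v) * norm v"
      using lipschitz_onD[OF lip on_segment[OF t] \<open>z \<in> X\<close>]
      by (simp add: dist_norm mult_right_mono)
    finally have "g (z + t *\<^sub>R v) \<bullet> v - g z \<bullet> v - C * t * (norm v)\<^sup>2 \<le> 0"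
      using t by (simp add: inner_diff_left power2_eq_square mult.assoc)
    moreover have "(h has_real_derivative g (z + t *\<^sub>R v) \<bullet> v - g z \<bullet> v - C * t * (norm v)\<^sup>2) (at t)"
    proof -
      have "((\<lambda>t. phi (z + t *\<^sub>R v)) has_real_derivative g (z + t *\<^sub>R v) \<bullet> v) (at t)"
        using deriv on_segment[OF t] by (intro has_real_derivative_along_line) blast
      then show ?thesis
        unfolding h_def by (auto intro!: derivative_eq_intros)
    qed
    ultimately show "\<exists>y. (h has_real_derivative y) (at t) \<and> y \<le> 0"
      by blast
  qed simp
  then show ?thesis
    by (simp add: h_def)
qed

lemma lipschitz_gradient_abs_bound:
  fixes phi :: "'a::real_inner \<Rightarrow> real"
  assumes "convex X" and deriv: "\<forall>w\<in>X. (phi has_derivative (\<lambda>h. g w \<bullet> h)) (at w)"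
    and lip: "C-lipschitz_on X g" and "z \<in> X" "z + v \<in> X"
  shows "\<bar>phi (z + v) - phi z - g z \<bullet> v\<bar> \<le> C/2 * (norm v)\<^sup>2"
proof -
  have "\<forall>w\<in>X. ((\<lambda>w. - phi w) has_derivative (\<lambda>h. - g w \<bullet> h)) (at w)"
    using deriv by (auto intro!: derivative_eq_intros)
  moreover have "C-lipschitz_on X (\<lambda>w. - g w)"
    using lip by simp
  ultimately have "- phi (z + v) + phi z + g z \<bullet> v \<le> C/2 * (norm v)\<^sup>2"
    using lipschitz_gradient_upper_bound[OF \<open>convex X\<close> _ _ \<open>z \<in> X\<close> \<open>z + v \<in> X\<close>] by fastforce
  with lipschitz_gradient_upper_bound[OF assms] show ?thesis
    unfolding abs_le_iff by linarith
qed

lemma LF_test_if_lipschitz_gradient: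
  assumes "convex X" "\<forall>w\<in>X. (f has_derivative (\<lambda>h. gf w \<bullet> h)) (at w)"
    and "Lf-lipschitz_on X gf" "z \<in> X" "z + a *\<^sub>R v \<in> X" "Lf \<le> L"
  shows "LF_test f z (gf z) v a L"
proof -
  have "f (z + a *\<^sub>R v) - f z - gf z \<bullet> (a *\<^sub>R v) \<le> Lf/2 * (norm (a *\<^sub>R v))\<^sup>2"
    using lipschitz_gradient_upper_bound[OF assms(1-5)] .
  also have "\<dots> \<le> 1/2 * L * a\<^sup>2 * (norm v)\<^sup>2"
    using mult_right_mono[OF \<open>Lf \<le> L\<close>, of "a\<^sup>2 * (norm v)\<^sup>2"]
    by (simp add: power_mult_distrib mult.assoc)
  finally show ?thesis
    unfolding LF_test_def by simp
qed

lemma LC_test_if_lipschitz_gradient: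
  assumes "convex X" "\<forall>w\<in>X. ((\<lambda>w. c w $ i) has_derivative (\<lambda>h. gc i w \<bullet> h)) (at w)"
    and "C-lipschitz_on X (gc i)" "z \<in> X" "z + a *\<^sub>R v \<in> X" "C \<le> G"
  shows "LC_test c gc z v a G i"
proof -
  have "\<bar>c (z + a *\<^sub>R v) $ i - c z $ i - gc i z \<bullet> (a *\<^sub>R v)\<bar> \<le> C/2 * (norm (a *\<^sub>R v))\<^sup>2"
    using lipschitz_gradient_abs_bound[OF assms(1-5)] .
  also have "\<dots> \<le> 1/2 * G * a\<^sup>2 * (norm v)\<^sup>2"
    using mult_right_mono[OF \<open>C \<le> G\<close>, of "a\<^sup>2 * (norm v)\<^sup>2"]
    by (simp add: power_mult_distrib mult.assoc)
  finally have "\<bar>c (z + a *\<^sub>R v) $ i - (c z $ i + a * (gc i z \<bullet> v))\<bar> \<le> 1/2 * G * a\<^sup>2 * (norm v)\<^sup>2"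
    by (simp add: algebra_simps)
  then show ?thesis
    unfolding LC_test_def using abs_triangle_ineq2[of "c (z + a *\<^sub>R v) $ i" "c z $ i + a * (gc i z \<bullet> v)"]
    by linarith
qed

lemma coordinatewise_growth_unbounded:
  fixes p :: "nat \<Rightarrow> 'i::finite \<Rightarrow> real"
  assumes "rho > 1" and pos: "\<And>i. 0 < p 0 i" and mono: "\<And>j i. p j i \<le> p (Suc j) i"
    and grow: "\<And>j. \<exists>i. rho * p j i \<le> p (Suc j) i"
  shows "\<exists>j i. B i < p j i"
proof (rule ccontr)
  assume "\<not> ?thesis"
  then have bounded: "p j i \<le> B i" for j i
    by (simp add: not_less)
  have p_pos: "0 < p j i" for j i
    by (induction j) (auto intro: pos less_le_trans[OF _ mono])
  define P where "P j = (\<Prod>i\<in>UNIV. p j i)" for j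
  have P_step: "rho * P j \<le> P (Suc j)" for j
  proof -
    obtain i0 where i0: "rho * p j i0 \<le> p (Suc j) i0"
      using grow by blast
    have rest: "(\<Prod>i\<in>UNIV - {i0}. p j i) \<le> (\<Prod>i\<in>UNIV - {i0}. p (Suc j) i)"
      by (intro prod_mono) (auto intro: mono less_imp_le[OF p_pos])
    have "rho * P j = (rho * p j i0) * (\<Prod>i\<in>UNIV - {i0}. p j i)"
      by (simp add: P_def prod.remove[of UNIV i0] mult.assoc)
    also have "\<dots> \<le> p (Suc j) i0 * (\<Prod>i\<in>UNIV - {i0}. p (Suc j) i)"
      using i0 rest p_pos by (intro mult_mono) (auto intro: prod_nonneg less_imp_le)
    also have "\<dots> = P (Suc j)"
      by (simp add: P_def prod.remove[of UNIV i0])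
    finally show ?thesis .
  qed
  have P_geometric: "rho ^ j * P 0 \<le> P j" for j
  proof (induction j)
    case (Suc j)
    then have "rho ^ Suc j * P 0 \<le> rho * P j"
      using \<open>rho > 1\<close> by simp
    then show ?case
      using P_step[of j] by linarith
  qed simp
  have P_bounded: "P j \<le> (\<Prod>i\<in>UNIV. B i)" for j
    unfolding P_def by (intro prod_mono) (auto intro: bounded less_imp_le[OF p_pos])
  have "P 0 > 0"
    unfolding P_def by (intro prod_pos) (auto intro: p_pos)
  obtain n where "(\<Prod>i\<in>UNIV. B i) / P 0 < rho ^ n"
    using real_arch_pow[OF \<open>rho > 1\<close>] by blast
  with \<open>P 0 > 0\<close> have "(\<Prod>i\<in>UNIV. B i) < rho ^ n * P 0"
    by (simp add: divide_less_eq)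
  with P_geometric[of n] P_bounded[of n] show False
    by linarith
qed

lemma backtracking_update_le_max:
  fixes p p0 C rho :: real
  assumes "0 \<le> rho" "p \<le> max p0 (rho * C)" "\<not> T \<Longrightarrow> p < C"
  shows "(if T then p else rho * p) \<le> max p0 (rho * C)"
proof (cases T)
  case False
  with assms have "rho * p \<le> rho * C"
    by (simp add: mult_left_mono)
  with False show ?thesis
    by simp
qed (use assms in simp)

locale inner_loop =
  fixes f :: "real^'n \<Rightarrow> real" and gf :: "real^'n \<Rightarrow> real^'n"
    and c :: "real^'n \<Rightarrow> real^'m" and gc :: "'m \<Rightarrow> real^'n \<Rightarrow> real^'n"
    and eta rho :: real and x :: "real^'n" and H :: "real^'n^'n" and d :: "real^'n"
    and tau L0 :: real and G0 :: "'m \<Rightarrow> real"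
  assumes rho_gt_1: "rho > 1" and L0_pos: "0 < L0" and G0_pos: "\<And>i. 0 < G0 i"
begin

abbreviation "L_at j \<equiv> fst (inner_LG f gf c gc eta rho x H d tau L0 G0 j)"
abbreviation "G_at j \<equiv> snd (inner_LG f gf c gc eta rho x H d tau L0 G0 j)"
abbreviation "alpha_at j \<equiv> trial_alpha f gf c gc eta rho x H d tau L0 G0 j"
abbreviation "accepted j \<equiv> accept f gf c gc eta rho x H d tau L0 G0 j"

lemma L_at_Suc:
  "L_at (Suc j) = (if LF_test f x (gf x) d (alpha_at j) (L_at j) then L_at j else rho * L_at j)"
  by (simp add: trial_alpha_def Let_def)

lemma G_at_Suc:
  "G_at (Suc j) i = (if LC_test c gc x d (alpha_at j) (G_at j i) i then G_at j i else rho * G_at j i)"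
  by (simp add: trial_alpha_def Let_def)

lemma rejected_test_fails:
  assumes "\<not> accepted j"
  shows "\<not> LF_test f x (gf x) d (alpha_at j) (L_at j) \<or> (\<exists>i. \<not> LC_test c gc x d (alpha_at j) (G_at j i) i)"
  using assms by (auto simp: accept_def Let_def)

lemma L_at_pos: "0 < L_at j" and G_at_pos: "0 < G_at j i"
  using rho_gt_1 L0_pos G0_pos
  by (induction j) (auto simp: L_at_Suc G_at_Suc simp del: inner_LG.simps(2))

lemma L_at_mono: "L_at j \<le> L_at (Suc j)" and G_at_mono: "G_at j i \<le> G_at (Suc j) i"
  using rho_gt_1 L_at_pos[of j] G_at_pos[of j i]
  by (auto simp: L_at_Suc G_at_Suc simp del: inner_LG.simps(2))

end

locale inner_loop_lipschitz = inner_loop f gf c gc eta rho x H d tau L0 G0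
  for f :: "real^'n \<Rightarrow> real" and gf :: "real^'n \<Rightarrow> real^'n"
    and c :: "real^'n \<Rightarrow> real^'m" and gc :: "'m \<Rightarrow> real^'n \<Rightarrow> real^'n"
    and eta rho :: real and x :: "real^'n" and H :: "real^'n^'n" and d :: "real^'n"
    and tau L0 :: real and G0 :: "'m \<Rightarrow> real" +
  fixes X :: "(real^'n) set" and Lf :: real and gam :: "'m \<Rightarrow> real"
  assumes LF_test_above_Lf: "\<And>a L. x + a *\<^sub>R d \<in> X \<Longrightarrow> Lf \<le> L \<Longrightarrow> LF_test f x (gf x) d a L"
    and LC_test_above_gam: "\<And>a G i. x + a *\<^sub>R d \<in> X \<Longrightarrow> gam i \<le> G \<Longrightarrow> LC_test c gc x d a G i"
    and trial_point_in_X: "\<And>j. \<forall>j'<j. \<not> accepted j' \<Longrightarrow> x + alpha_at j *\<^sub>R d \<in> X"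
begin

lemma L_at_bounded: "\<forall>j'<j. \<not> accepted j' \<Longrightarrow> L_at j \<le> max L0 (rho * Lf)"
proof (induction j)
  case (Suc j)
  have "x + alpha_at j *\<^sub>R d \<in> X"
    using Suc.prems by (intro trial_point_in_X) simp
  then have "\<not> LF_test f x (gf x) d (alpha_at j) (L_at j) \<Longrightarrow> L_at j < Lf"
    using LF_test_above_Lf not_le by blast
  with Suc show ?case
    unfolding L_at_Suc by (intro backtracking_update_le_max) (use rho_gt_1 in auto)
qed simp

lemma G_at_bounded: "\<forall>j'<j. \<not> accepted j' \<Longrightarrow> G_at j i \<le> max (G0 i) (rho * gam i)"
proof (induction j)
  case (Suc j)
  have "x + alpha_at j *\<^sub>R d \<in> X"
    using Suc.prems by (intro trial_point_in_X) simp
  then have "\<not> LC_test c gc x d (alpha_at j) (G_at j i) i \<Longrightarrow> G_at j i < gam i"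
    using LC_test_above_gam not_le by blast
  with Suc show ?case
    unfolding G_at_Suc by (intro backtracking_update_le_max) (use rho_gt_1 in auto)
qed simp

lemma eventually_accepted: "\<exists>j. accepted j"
proof (rule ccontr)
  assume never: "\<not> (\<exists>j. accepted j)"
  define p :: "nat \<Rightarrow> 'm option \<Rightarrow> real"
    where "p j = case_option (L_at j) (G_at j)" for j
  define B where "B = case_option (max L0 (rho * Lf)) (\<lambda>i. max (G0 i) (rho * gam i))"
  have "\<exists>j i. B i < p j i"
  proof (rule coordinatewise_growth_unbounded[OF rho_gt_1])
    show "0 < p 0 i" for i
      by (cases i) (auto simp: p_def L0_pos G0_pos)
    show "p j i \<le> p (Suc j) i" for j i
      by (cases i) (simp_all add: p_def L_at_mono G_at_mono del: inner_LG.simps(2))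
    show "\<exists>i. rho * p j i \<le> p (Suc j) i" for j
      using rejected_test_fails[of j] never
      by (auto simp: p_def L_at_Suc G_at_Suc simp del: inner_LG.simps(2) split: option.split)
  qed
  moreover have "p j i \<le> B i" for j i
    using never L_at_bounded G_at_bounded by (cases i) (auto simp: p_def B_def)
  ultimately show False
    by (meson not_less)
qed

lemma first_acceptance:
  obtains j where "accepted j" "\<forall>j'<j. \<not> accepted j'"
    and "L_at j \<le> max L0 (rho * Lf)" "\<forall>i. G_at j i \<le> max (G0 i) (rho * gam i)"
  using eventually_accepted exists_least_iff[of accepted] L_at_bounded G_at_bounded by blast

end

lemma inner_loop_lipschitzI:
  assumes "rho > 1" "0 < L0" "\<And>i. 0 < G0 i" "convex X" "x \<in> X"
    and f_deriv: "\<forall>w\<in>X. (f has_derivative (\<lambda>h. gf w \<bullet> h)) (at w)" and "Lf-lipschitz_on X gf"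
    and c_deriv: "\<forall>i. \<forall>w\<in>X. ((\<lambda>w. c w $ i) has_derivative (\<lambda>h. gc i w \<bullet> h)) (at w)"
    and gc_lip: "\<forall>i. (gam i)-lipschitz_on X (gc i)"
    and "\<And>j. \<forall>j'<j. \<not> accept f gf c gc eta rho x H d tau L0 G0 j' \<Longrightarrow>
      x + trial_alpha f gf c gc eta rho x H d tau L0 G0 j *\<^sub>R d \<in> X"
  shows "inner_loop_lipschitz f gf c gc eta rho x H d tau L0 G0 X Lf gam"
proof
  show "LF_test f x (gf x) d a L" if "x + a *\<^sub>R d \<in> X" "Lf \<le> L" for a L
    using LF_test_if_lipschitz_gradient[OF \<open>convex X\<close> f_deriv _ \<open>x \<in> X\<close> that] assms by blast
  show "LC_test c gc x d a G i" if "x + a *\<^sub>R d \<in> X" "gam i \<le> G" for a G i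
    using LC_test_if_lipschitz_gradient[OF \<open>convex X\<close> _ _ \<open>x \<in> X\<close> that] c_deriv gc_lip by blast
qed (use assms in auto)

theorem lemma2p8:
  fixes f :: "real^'n \<Rightarrow> real" and gf :: "real^'n \<Rightarrow> real^'n"
    and c :: "real^'n \<Rightarrow> real^'m" and gc :: "'m \<Rightarrow> real^'n \<Rightarrow> real^'n"
    and X :: "(real^'n) set" and Lf :: real and gam :: "'m \<Rightarrow> real"
    and x :: "nat \<Rightarrow> real^'n" and H :: "nat \<Rightarrow> real^'n^'n"
    and d :: "nat \<Rightarrow> real^'n" and y :: "nat \<Rightarrow> real^'m"
    and tau :: "nat \<Rightarrow> real" and tau_m1 eps sgm eta rho Lm1 :: real
    and Gm1 :: "'m \<Rightarrow> real"
    and L0 :: "nat \<Rightarrow> real" and G0 :: "nat \<Rightarrow> 'm \<Rightarrow> real"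
    and Lk :: "nat \<Rightarrow> real" and Gk :: "nat \<Rightarrow> 'm \<Rightarrow> real" and alpha :: "nat \<Rightarrow> real"
  defines "active \<equiv> (\<lambda>k. \<forall>k'\<le>k. \<not> stop_test gf c gc (x k') (y k'))"
  assumes params: "tau_m1 > 0" "0 < eps" "eps < 1" "0 < sgm" "sgm < 1" "0 < eta" "eta < 1"
      "rho > 1" "Lm1 > 0" "\<forall>i. Gm1 i > 0"
    \<comment> \<open>Standing Assumption\<close>
    and X_open: "open X" and X_convex: "convex X"
    and f_deriv: "\<forall>z\<in>X. (f has_derivative (\<lambda>h. gf z \<bullet> h)) (at z)"
    and gf_cont: "continuous_on X gf"
    and f_bdd_below: "\<exists>B. \<forall>z\<in>X. B \<le> f z"
    and gf_bdd: "bounded (gf ` X)"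
    and gf_lip: "Lf-lipschitz_on X gf"
    and c_deriv: "\<forall>i. \<forall>z\<in>X. ((\<lambda>w. c w $ i) has_derivative (\<lambda>h. gc i z \<bullet> h)) (at z)"
    and c_bdd: "bounded (c ` X)"
    and gc_bdd: "\<forall>i. bounded (gc i ` X)"
    and gc_lip: "\<forall>i. (gam i)-lipschitz_on X (gc i)"
    and sing: "\<exists>s>0. \<forall>z\<in>X. \<forall>v. s * norm v \<le> norm (transpose (jac gc z) *v v)"
    \<comment> \<open>iterates and trial points lie in X\<close>
    and iter_X: "\<forall>k. active k \<longrightarrow> x k \<in> X"
    and trial_X: "\<forall>k j. active k \<and> (\<forall>j'<j. \<not> accept f gf c gc eta rho (x k) (H k) (d k) (tau k) (L0 k) (G0 k) j')
        \<longrightarrow> x k + trial_alpha f gf c gc eta rho (x k) (H k) (d k) (tau k) (L0 k) (G0 k) j *\<^sub>R d k \<in> X"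
    \<comment> \<open>conditions on H_k\<close>
    and H_cond: "\<exists>kH. \<exists>zeta>0. \<forall>k. active k \<longrightarrow>
        transpose (H k) = H k \<and> onorm (\<lambda>v. H k *v v) \<le> kH \<and>
        (\<forall>u. jac gc (x k) *v u = 0 \<longrightarrow> zeta * (norm u)\<^sup>2 \<le> u \<bullet> (H k *v u))"
    \<comment> \<open>Algorithm 1\<close>
    and newton: "\<forall>k. active k \<longrightarrow>
        H k *v d k + transpose (jac gc (x k)) *v y k = - gf (x k) \<and> jac gc (x k) *v d k = - c (x k)"
    and tau_rule: "\<forall>k. active k \<longrightarrow>
        tau k = tau_upd eps sgm (if k = 0 then tau_m1 else tau (k - 1)) (gf (x k)) (H k) (d k) (c (x k))"
    and L0_rule: "\<forall>k. active k \<longrightarrow> 0 < L0 k \<and> L0 k \<le> (if k = 0 then Lm1 else Lk (k - 1))"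
    and G0_rule: "\<forall>k i. active k \<longrightarrow> 0 < G0 k i \<and> G0 k i \<le> (if k = 0 then Gm1 i else Gk (k - 1) i)"
    and output_rule: "\<forall>k j. active k \<and> accept f gf c gc eta rho (x k) (H k) (d k) (tau k) (L0 k) (G0 k) j
        \<and> (\<forall>j'<j. \<not> accept f gf c gc eta rho (x k) (H k) (d k) (tau k) (L0 k) (G0 k) j') \<longrightarrow>
        Lk k = fst (inner_LG f gf c gc eta rho (x k) (H k) (d k) (tau k) (L0 k) (G0 k) j) \<and>
        Gk k = snd (inner_LG f gf c gc eta rho (x k) (H k) (d k) (tau k) (L0 k) (G0 k) j) \<and>
        alpha k = trial_alpha f gf c gc eta rho (x k) (H k) (d k) (tau k) (L0 k) (G0 k) j \<and>
        x (Suc k) = x k + alpha k *\<^sub>R d k"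
  shows "\<forall>k. active k \<longrightarrow>
      (\<exists>j. accept f gf c gc eta rho (x k) (H k) (d k) (tau k) (L0 k) (G0 k) j) \<and>
      Lk k \<le> max Lm1 (rho * Lf) \<and> (\<forall>i. Gk k i \<le> max (Gm1 i) (rho * gam i))"
proof -
  have outer_step: "(\<exists>j. accept f gf c gc eta rho (x k) (H k) (d k) (tau k) (L0 k) (G0 k) j) \<and>
      Lk k \<le> max Lm1 (rho * Lf) \<and> (\<forall>i. Gk k i \<le> max (Gm1 i) (rho * gam i))"
    if act: "active k" and L0_le: "L0 k \<le> max Lm1 (rho * Lf)"
      and G0_le: "\<forall>i. G0 k i \<le> max (Gm1 i) (rho * gam i)" for k
  proof -
    have "x k \<in> X"
      using iter_X act by blast
    interpret inner_loop_lipschitz f gf c gc eta rho "x k" "H k" "d k" "tau k" "L0 k" "G0 k" X Lf gam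
      using params L0_rule G0_rule act trial_X
      by (intro inner_loop_lipschitzI[OF _ _ _ X_convex \<open>x k \<in> X\<close> f_deriv gf_lip c_deriv gc_lip]) auto
    obtain j where "accepted j" "\<forall>j'<j. \<not> accepted j'"
      and "L_at j \<le> max (L0 k) (rho * Lf)" "\<forall>i. G_at j i \<le> max (G0 k i) (rho * gam i)"
      by (rule first_acceptance)
    moreover from this output_rule act have "Lk k = L_at j" "Gk k = G_at j"
      by blast+
    ultimately show ?thesis
      using L0_le G0_le by (fastforce intro: order_trans)
  qed
  have initial_bounds: "L0 k \<le> max Lm1 (rho * Lf) \<and> (\<forall>i. G0 k i \<le> max (Gm1 i) (rho * gam i))"
    if "active k" for k
    using that
  proof (induction k)
    case 0
    then show ?case
      using L0_rule G0_rule by (fastforce intro: max.coboundedI1)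
  next
    case (Suc k)
    then have "active k"
      by (simp add: active_def)
    with Suc.IH outer_step have "Lk k \<le> max Lm1 (rho * Lf)" "\<forall>i. Gk k i \<le> max (Gm1 i) (rho * gam i)"
      by blast+
    with Suc.prems L0_rule G0_rule show ?case
      by (fastforce intro: order_trans)
  qed
  show ?thesis
    using outer_step initial_bounds by blast
qed

end
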